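(* Let $V$ be a finite-dimensional real vector space, $p\ge2$, and $(P,\Omega)$ a linear Dirac structure of order $p$ on $V$ relative to $\mathbb R$. Let $L=\{(v,\omega)\in V\times\Lambda^{p-1}V^*: v\in P,\ i_v\Omega=\omega|_{\Lambda^{p-1}P}\}$ and $L^\perp=\{(Z,\eta)\in\Lambda^{p-1}V\times V^*: Z\in\Lambda^{p-1}P,\ i_Z\Omega=\eta|_P\}$, and let $\pi^*(L)\subset\Lambda^{p-1}V^*$ and $\pi^*(L^\perp)\subset V^*$ be the projections onto the second components. Then $\Lambda^{p-1}\big(\pi^*(L^\perp)\big)\subset\pi^*(L)$.
   Context: A linear Dirac structure of order $p$ on $V$ relative to $\mathbb R$ is a pair $(P,\Omega)$ where $P\subset V$ is a subspace and $\Omega\in\Lambda^pP^*$, satisfying condition (H): for all $Z_1,\dots,Z_{p-1}\in\Lambda^{p-1}P$ there exists $v\in P$ with $(i_{Z_1}\Omega)\wedge\dots\wedge(i_{Z_{p-1}}\Omega)=i_v\Omega$. Here $(i_v\Omega)(Z)=\Omega(v\wedge Z)$ for $v\in P$, $Z\in\Lambda^{p-1}P$, and $(i_Z\Omega)(w)=\Omega(Z\wedge w)$ for $w\in P$. *)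

theory Defs
  imports "HOL-Analysis.Analysis"
begin

text \<open>
  V is a finite-dimensional real vector space, modelled as a type
  'v of class euclidean_space (the inner product is never used).
  A k-form on a subspace P (an element of the k-th exterior power of the dual of P)
  is represented as a function on lists of vectors, which on lists of length k with
  entries in P is multilinear and alternating, and which is 0 on all other lists
  (so that the representation is canonical).
\<close>

definition multilinear_on :: "'v::real_vector set \<Rightarrow> nat \<Rightarrow> ('v list \<Rightarrow> real) \<Rightarrow> bool" where
  "multilinear_on P k f \<longleftrightarrow>
     (\<forall>xs i u w (a::real) (b::real). length xs = k \<and> set xs \<subseteq> P \<and> i < k \<and> u \<in> P \<and> w \<in> P \<longrightarrow>
        f (xs[i := a *\<^sub>R u + b *\<^sub>R w]) = a * f (xs[i := u]) + b * f (xs[i := w]))"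

definition alternating_on :: "'v set \<Rightarrow> nat \<Rightarrow> ('v list \<Rightarrow> real) \<Rightarrow> bool" where
  "alternating_on P k f \<longleftrightarrow>
     (\<forall>xs i j. length xs = k \<and> set xs \<subseteq> P \<and> i < k \<and> j < k \<and> i \<noteq> j \<and> xs ! i = xs ! j
        \<longrightarrow> f xs = 0)"

definition alt_form :: "'v::real_vector set \<Rightarrow> nat \<Rightarrow> ('v list \<Rightarrow> real) \<Rightarrow> bool" where
  "alt_form P k f \<longleftrightarrow> multilinear_on P k f \<and> alternating_on P k f \<and>
     (\<forall>xs. \<not> (length xs = k \<and> set xs \<subseteq> P) \<longrightarrow> f xs = 0)"

text \<open>Elements Z of \<Lambda>^k P (as a subspace of \<Lambda>^k V) are represented as finite formal
  linear combinations of decomposable multivectors z_1 \<and> ... \<and> z_k with z_i \<in> P: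
  a list of pairs (c, [z_1,...,z_k]).\<close>
definition multivec_in :: "'v set \<Rightarrow> nat \<Rightarrow> (real \<times> 'v list) list \<Rightarrow> bool" where
  "multivec_in P k Z \<longleftrightarrow> (\<forall>(c, zs) \<in> set Z. length zs = k \<and> set zs \<subseteq> P)"

definition iZ :: "('v list \<Rightarrow> real) \<Rightarrow> (real \<times> 'v list) list \<Rightarrow> 'v \<Rightarrow> real" where
  "iZ \<Omega> Z w = (\<Sum>(c, zs) \<leftarrow> Z. c * \<Omega> (zs @ [w]))"

definition iv :: "('v list \<Rightarrow> real) \<Rightarrow> 'v \<Rightarrow> 'v list \<Rightarrow> real" where
  "iv \<Omega> v zs = \<Omega> (v # zs)"

text \<open>Wedge product \<eta>_1 \<and> ... \<and> \<eta>_k of 1-forms (determinant convention).\<close>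
definition wedge1 :: "('v \<Rightarrow> real) list \<Rightarrow> 'v list \<Rightarrow> real" where
  "wedge1 etas ws =
     (if length ws = length etas then
        (\<Sum>\<sigma> | \<sigma> permutes {..<length etas}.
           of_int (sign \<sigma>) * (\<Prod>i<length etas. (etas ! i) (ws ! \<sigma> i)))
      else 0)"

text \<open>Linear Dirac structure of order p on V relative to \<real>, condition (H) included.\<close>
definition linear_dirac :: "nat \<Rightarrow> 'v::real_vector set \<Rightarrow> ('v list \<Rightarrow> real) \<Rightarrow> bool" where
  "linear_dirac p P \<Omega> \<longleftrightarrow> subspace P \<and> alt_form P p \<Omega> \<and>
     (\<forall>Zs. length Zs = p - 1 \<and> (\<forall>Z \<in> set Zs. multivec_in P (p - 1) Z) \<longrightarrow>
        (\<exists>v \<in> P. \<forall>ws. length ws = p - 1 \<and> set ws \<subseteq> P \<longrightarrow>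
            wedge1 (map (iZ \<Omega>) Zs) ws = iv \<Omega> v ws))"

definition piL :: "nat \<Rightarrow> 'v::real_vector set \<Rightarrow> ('v list \<Rightarrow> real) \<Rightarrow> ('v list \<Rightarrow> real) set" where
  "piL p P \<Omega> = {\<omega>. alt_form UNIV (p - 1) \<omega> \<and>
      (\<exists>v \<in> P. \<forall>zs. length zs = p - 1 \<and> set zs \<subseteq> P \<longrightarrow> iv \<Omega> v zs = \<omega> zs)}"

definition piLperp :: "nat \<Rightarrow> 'v::real_vector set \<Rightarrow> ('v list \<Rightarrow> real) \<Rightarrow> ('v \<Rightarrow> real) set" where
  "piLperp p P \<Omega> = {\<eta>. linear \<eta> \<and>
      (\<exists>Z. multivec_in P (p - 1) Z \<and> (\<forall>w \<in> P. iZ \<Omega> Z w = \<eta> w))}"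

definition ext_power :: "nat \<Rightarrow> ('v \<Rightarrow> real) set \<Rightarrow> ('v list \<Rightarrow> real) set" where
  "ext_power k W = {\<omega>. \<exists>cs :: (real \<times> ('v \<Rightarrow> real) list) list.
      (\<forall>(c, etas) \<in> set cs. length etas = k \<and> set etas \<subseteq> W) \<and>
      \<omega> = (\<lambda>ws. \<Sum>(c, etas) \<leftarrow> cs. c * wedge1 etas ws)}"

end

theory Submission
  imports Defs "Jordan_Normal_Form.Determinant"
begin

text \<open>
  Every \<eta> \<in> \<pi>^*(L^\<bottom>) coincides on P with some i_Z \<Omega>, Z \<in> \<Lambda>^{p-1} P, so by
  condition (H) a wedge \<eta>_1 \<and> ... \<and> \<eta>_{p-1} of such forms coincides on \<Lambda>^{p-1} P with
  i_v \<Omega> for some v \<in> P. As v \<mapsto> i_v \<Omega> is linear, the same holds for linear combinations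
  of such wedges, and these are (p-1)-forms on V because wedges of linear forms are
  multilinear and alternating.
\<close>

definition wedge_mat :: "('v \<Rightarrow> real) list \<Rightarrow> 'v list \<Rightarrow> real mat" where
  "wedge_mat etas ws = mat (length etas) (length etas) (\<lambda>(i, j). (etas ! j) (ws ! i))"

lemma wedge1_eq_det_wedge_mat:
  assumes "length ws = length etas"
  shows "wedge1 etas ws = det (wedge_mat etas ws)"
proof -
  have "wedge1 etas ws = det (transpose_mat (wedge_mat etas ws))"
    using assms unfolding wedge1_def det_def wedge_mat_def by (simp add: atLeast0LessThan)
  then show ?thesis
    by (simp add: det_transpose[OF mat_carrier] wedge_mat_def)
qed

lemma wedge1_eq_sum_permutes:
  assumes "length ws = length etas"
  shows "wedge1 etas ws =
    (\<Sum>\<sigma> | \<sigma> permutes {..<length etas}. of_int (sign \<sigma>) * (\<Prod>i<length etas. (etas ! \<sigma> i) (ws ! i)))"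
  using assms unfolding wedge1_eq_det_wedge_mat[OF assms] det_def wedge_mat_def
  by (simp add: atLeast0LessThan)

lemma wedge1_eq_zero_if_repeated:
  assumes "length ws = length etas" "i < length ws" "j < length ws" "i \<noteq> j" "ws ! i = ws ! j"
  shows "wedge1 etas ws = 0"
  unfolding wedge1_eq_det_wedge_mat[OF assms(1)]
  by (rule det_identical_rows[of _ "length etas" i j]) (use assms in \<open>auto simp: row_def wedge_mat_def\<close>)

lemma prod_list_update_linear:
  fixes g :: "nat \<Rightarrow> 'v::real_vector \<Rightarrow> real"
  assumes "linear (g k)" "k < length xs"
  shows "(\<Prod>i<length xs. g i (xs[k := a *\<^sub>R u + b *\<^sub>R w] ! i)) =
    a * (\<Prod>i<length xs. g i (xs[k := u] ! i)) + b * (\<Prod>i<length xs. g i (xs[k := w] ! i))"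
proof -
  have factor_k: "(\<Prod>i<length xs. g i (xs[k := y] ! i)) = g k y * (\<Prod>i\<in>{..<length xs} - {k}. g i (xs ! i))"
    for y using assms(2) by (simp add: prod.remove)
  show ?thesis
    unfolding factor_k using assms(1) by (simp add: linear_add linear_scale algebra_simps)
qed

lemma wedge1_update_linear:
  assumes "\<forall>\<eta>\<in>set etas. linear \<eta>" "length ws = length etas" "k < length ws"
  shows "wedge1 etas (ws[k := a *\<^sub>R u + b *\<^sub>R w]) =
    a * wedge1 etas (ws[k := u]) + b * wedge1 etas (ws[k := w])"
proof -
  let ?t = "\<lambda>\<sigma> y. of_int (sign \<sigma>) * (\<Prod>i<length etas. (etas ! \<sigma> i) (ws[k := y] ! i))"
  have pointwise: "?t \<sigma> (a *\<^sub>R u + b *\<^sub>R w) = a * ?t \<sigma> u + b * ?t \<sigma> w"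
    if "\<sigma> permutes {..<length etas}" for \<sigma>
  proof -
    have "\<sigma> k < length etas"
      using permutes_in_image[OF that, of k] assms(2,3) by simp
    then have "linear (etas ! \<sigma> k)"
      using assms(1) by simp
    then show ?thesis
      using prod_list_update_linear[of "\<lambda>i. etas ! \<sigma> i" k ws a u b w] assms(2,3)
      by (simp add: algebra_simps)
  qed
  have "(\<Sum>\<sigma> | \<sigma> permutes {..<length etas}. ?t \<sigma> (a *\<^sub>R u + b *\<^sub>R w)) =
      (\<Sum>\<sigma> | \<sigma> permutes {..<length etas}. a * ?t \<sigma> u + b * ?t \<sigma> w)"
    using pointwise by (intro sum.cong) auto
  then show ?thesis
    using assms(2) by (simp add: wedge1_eq_sum_permutes sum_distrib_left sum.distrib)
qed

lemma alt_form_wedge1: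
  fixes etas :: "('v::real_vector \<Rightarrow> real) list"
  assumes "\<forall>\<eta>\<in>set etas. linear \<eta>"
  shows "alt_form UNIV (length etas) (wedge1 etas)"
  unfolding alt_form_def multilinear_on_def alternating_on_def
proof (intro conjI allI impI)
  fix ws :: "'v list" and k and u w :: 'v and a b :: real
  assume "length ws = length etas \<and> set ws \<subseteq> UNIV \<and> k < length etas \<and> u \<in> UNIV \<and> w \<in> UNIV"
  then show "wedge1 etas (ws[k := a *\<^sub>R u + b *\<^sub>R w]) =
      a * wedge1 etas (ws[k := u]) + b * wedge1 etas (ws[k := w])"
    using wedge1_update_linear[OF assms] by simp
next
  fix ws :: "'v list" and i j
  assume "length ws = length etas \<and> set ws \<subseteq> UNIV \<and> i < length etas \<and> j < length etas \<and> i \<noteq> j \<and> ws ! i = ws ! j"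
  then show "wedge1 etas ws = 0"
    by (auto intro: wedge1_eq_zero_if_repeated)
next
  fix ws :: "'v list"
  assume "\<not> (length ws = length etas \<and> set ws \<subseteq> UNIV)"
  then show "wedge1 etas ws = 0"
    by (simp add: wedge1_def)
qed

lemma alt_form_zero: "alt_form P k (\<lambda>_. 0)"
  by (simp add: alt_form_def multilinear_on_def alternating_on_def)

lemma alt_form_lincomb:
  assumes "alt_form P k f" "alt_form P k g"
  shows "alt_form P k (\<lambda>ws. c * f ws + g ws)"
  using assms unfolding alt_form_def multilinear_on_def alternating_on_def
  by (simp add: algebra_simps)

lemma sum_list_lincomb_mem:
  fixes S :: "('a \<Rightarrow> real) set" and F :: "'b \<Rightarrow> 'a \<Rightarrow> real"
  assumes "(\<lambda>_. 0) \<in> S"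
    and "\<And>f g c. f \<in> S \<Longrightarrow> g \<in> S \<Longrightarrow> (\<lambda>x. c * f x + g x) \<in> S"
    and "\<forall>(c, e) \<in> set cs. F e \<in> S"
  shows "(\<lambda>x. \<Sum>(c, e) \<leftarrow> cs. c * F e x) \<in> S"
  using assms(3)
proof (induction cs)
  case Nil
  then show ?case using assms(1) by simp
next
  case (Cons ce cs)
  then show ?case using assms(2) by (cases ce) auto
qed

lemma ext_power_alt_form:
  assumes "\<forall>\<eta> \<in> W. linear \<eta>"
  shows "ext_power k W \<subseteq> {\<omega>. alt_form UNIV k \<omega>}"
proof
  fix \<omega> assume "\<omega> \<in> ext_power k W"
  then obtain cs where cs: "\<forall>(c, etas) \<in> set cs. length etas = k \<and> set etas \<subseteq> W"
    and \<omega>: "\<omega> = (\<lambda>ws. \<Sum>(c, etas) \<leftarrow> cs. c * wedge1 etas ws)"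
    unfolding ext_power_def by blast
  have "\<forall>(c, etas) \<in> set cs. wedge1 etas \<in> {\<omega>. alt_form UNIV k \<omega>}"
    using cs assms alt_form_wedge1 by fastforce
  then show "\<omega> \<in> {\<omega>. alt_form UNIV k \<omega>}"
    unfolding \<omega> by (intro sum_list_lincomb_mem) (auto intro: alt_form_zero alt_form_lincomb)
qed

lemma wedge1_cong:
  assumes "length etas = length etas'" "\<And>i w. i < length etas \<Longrightarrow> w \<in> P \<Longrightarrow> (etas ! i) w = (etas' ! i) w"
    and "set ws \<subseteq> P"
  shows "wedge1 etas ws = wedge1 etas' ws"
proof (cases "length ws = length etas")
  case True
  have "(\<Prod>i<length etas. (etas ! i) (ws ! \<sigma> i)) = (\<Prod>i<length etas. (etas' ! i) (ws ! \<sigma> i))"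
    if "\<sigma> permutes {..<length etas}" for \<sigma>
  proof (rule prod.cong)
    fix i assume i: "i \<in> {..<length etas}"
    then have "ws ! \<sigma> i \<in> P"
      using permutes_in_image[OF that, of i] True assms(3) by auto
    then show "(etas ! i) (ws ! \<sigma> i) = (etas' ! i) (ws ! \<sigma> i)"
      using assms(2) i by simp
  qed simp
  then show ?thesis
    using assms(1) unfolding wedge1_def by (auto intro!: sum.cong)
next
  case False
  then show ?thesis
    using assms(1) by (simp add: wedge1_def)
qed

text \<open>Functions agreeing with some i_v \<Omega>, v \<in> P, on \<Lambda>^{p-1} P; off P they are unconstrained.\<close>

definition interior_products :: "nat \<Rightarrow> 'v set \<Rightarrow> ('v list \<Rightarrow> real) \<Rightarrow> ('v list \<Rightarrow> real) set" where
  "interior_products p P \<Omega> =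
    {f. \<exists>v \<in> P. \<forall>zs. length zs = p - 1 \<and> set zs \<subseteq> P \<longrightarrow> iv \<Omega> v zs = f zs}"

lemma piL_eq: "piL p P \<Omega> = {\<omega>. alt_form UNIV (p - 1) \<omega>} \<inter> interior_products p P \<Omega>"
  unfolding piL_def interior_products_def by blast

lemma iv_linear:
  assumes "alt_form P p \<Omega>" "0 < p" "v \<in> P" "v' \<in> P" "length zs = p - 1" "set zs \<subseteq> P"
  shows "iv \<Omega> (a *\<^sub>R v + b *\<^sub>R v') zs = a * iv \<Omega> v zs + b * iv \<Omega> v' zs"
proof -
  have "length (v # zs) = p" "set (v # zs) \<subseteq> P"
    using assms by auto
  then have "\<Omega> ((v # zs)[0 := a *\<^sub>R v + b *\<^sub>R v']) = a * \<Omega> ((v # zs)[0 := v]) + b * \<Omega> ((v # zs)[0 := v'])"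
    using assms(1-4) unfolding alt_form_def multilinear_on_def by blast
  then show ?thesis
    by (simp add: iv_def)
qed

lemma zero_mem_interior_products:
  assumes "subspace P" "alt_form P p \<Omega>" "0 < p"
  shows "(\<lambda>_. 0) \<in> interior_products p P \<Omega>"
proof -
  have "iv \<Omega> 0 zs = 0" if "length zs = p - 1" "set zs \<subseteq> P" for zs
    using iv_linear[OF assms(2,3) _ _ that, of 0 0 0 0] subspace_0[OF assms(1)] by simp
  then show ?thesis
    using subspace_0[OF assms(1)] unfolding interior_products_def by blast
qed

lemma lincomb_mem_interior_products:
  assumes "subspace P" "alt_form P p \<Omega>" "0 < p"
    and "f \<in> interior_products p P \<Omega>" "g \<in> interior_products p P \<Omega>"
  shows "(\<lambda>zs. c * f zs + g zs) \<in> interior_products p P \<Omega>"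
proof -
  obtain v v' where v: "v \<in> P" "v' \<in> P"
    and fg: "\<And>zs. length zs = p - 1 \<Longrightarrow> set zs \<subseteq> P \<Longrightarrow> iv \<Omega> v zs = f zs \<and> iv \<Omega> v' zs = g zs"
    using assms(4,5) unfolding interior_products_def by blast
  have "c *\<^sub>R v + v' \<in> P"
    using assms(1) v by (simp add: subspace_add subspace_scale)
  moreover have "iv \<Omega> (c *\<^sub>R v + v') zs = c * f zs + g zs"
    if "length zs = p - 1" "set zs \<subseteq> P" for zs
    using iv_linear[OF assms(2,3) v that, of c 1] fg[OF that] by simp
  ultimately show ?thesis
    unfolding interior_products_def by blast
qed

lemma wedge1_mem_interior_products:
  assumes "linear_dirac p P \<Omega>" "length etas = p - 1" "set etas \<subseteq> piLperp p P \<Omega>"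
  shows "wedge1 etas \<in> interior_products p P \<Omega>"
proof -
  have "\<forall>\<eta> \<in> set etas. \<exists>Z. multivec_in P (p - 1) Z \<and> (\<forall>w \<in> P. iZ \<Omega> Z w = \<eta> w)"
    using assms(3) unfolding piLperp_def by blast
  then obtain Zf where Zf: "\<And>\<eta>. \<eta> \<in> set etas \<Longrightarrow> multivec_in P (p - 1) (Zf \<eta>) \<and> (\<forall>w \<in> P. iZ \<Omega> (Zf \<eta>) w = \<eta> w)"
    by metis
  obtain v where "v \<in> P"
    and v: "\<forall>ws. length ws = p - 1 \<and> set ws \<subseteq> P \<longrightarrow> wedge1 (map (iZ \<Omega> \<circ> Zf) etas) ws = iv \<Omega> v ws"
    using assms(1,2) Zf unfolding linear_dirac_def by (auto dest!: spec[of _ "map Zf etas"])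
  have "wedge1 etas ws = wedge1 (map (iZ \<Omega> \<circ> Zf) etas) ws" if "set ws \<subseteq> P" for ws
    by (rule wedge1_cong[OF _ _ that]) (simp_all add: Zf)
  then show ?thesis
    using \<open>v \<in> P\<close> v unfolding interior_products_def by auto
qed

lemma ext_power_subset_interior_products:
  assumes "linear_dirac p P \<Omega>" "0 < p"
  shows "ext_power (p - 1) (piLperp p P \<Omega>) \<subseteq> interior_products p P \<Omega>"
proof
  fix \<omega> assume "\<omega> \<in> ext_power (p - 1) (piLperp p P \<Omega>)"
  then obtain cs where cs: "\<forall>(c, etas) \<in> set cs. length etas = p - 1 \<and> set etas \<subseteq> piLperp p P \<Omega>"
    and \<omega>: "\<omega> = (\<lambda>ws. \<Sum>(c, etas) \<leftarrow> cs. c * wedge1 etas ws)"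
    unfolding ext_power_def by blast
  have "\<forall>(c, etas) \<in> set cs. wedge1 etas \<in> interior_products p P \<Omega>"
    using cs wedge1_mem_interior_products[OF assms(1)] by fastforce
  moreover have "subspace P" "alt_form P p \<Omega>"
    using assms(1) unfolding linear_dirac_def by blast+
  ultimately show "\<omega> \<in> interior_products p P \<Omega>"
    unfolding \<omega> using assms(2)
    by (intro sum_list_lincomb_mem) (auto intro: zero_mem_interior_products lincomb_mem_interior_products)
qed

theorem lemma4p4:
  fixes P :: "'v::euclidean_space set"
    and \<Omega> :: "'v list \<Rightarrow> real"
    and p :: nat
  assumes "p \<ge> 2"
    and "linear_dirac p P \<Omega>"
  shows "ext_power (p - 1) (piLperp p P \<Omega>) \<subseteq> piL p P \<Omega>"
proof -
  have "\<forall>\<eta> \<in> piLperp p P \<Omega>. linear \<eta>"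
    unfolding piLperp_def by blast
  then have "ext_power (p - 1) (piLperp p P \<Omega>) \<subseteq> {\<omega>. alt_form UNIV (p - 1) \<omega>}"
    by (rule ext_power_alt_form)
  moreover have "ext_power (p - 1) (piLperp p P \<Omega>) \<subseteq> interior_products p P \<Omega>"
    using assms by (intro ext_power_subset_interior_products) auto
  ultimately show ?thesis
    unfolding piL_eq by blast
qed

end
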